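(* Let $\theta\mapsto\mathcal E_\theta$ be a differentiable family of unital quantum channels on $d\times d$ matrices with Kraus operators $\{K_i^\theta\}$ and Liouville representation $T_\theta=\sum_iK_i^\theta\otimes K_i^{\theta*}$, and let $\theta_0$ be a parameter value. Denote by $P$ the projection onto the subspace $\mathcal P$ spanned by the eigenvectors of $T_\theta^\dagger T_\theta$ with eigenvalue $1$. Suppose that at $\theta=\theta_0$: (i) $PT_\theta^\dagger\dot T_\theta P\neq0$ and $PT_\theta^\dagger\dot T_\theta P$ is a normal operator; and (ii) there exist a unitary $U_c$ and a matrix $R_0$ with $|R_0\rangle\rangle$ an eigenvector of $PT_\theta^\dagger\dot T_\theta P$ associated with a nonzero eigenvalue, such that $$U_c^\dagger R_0U_c=\sum_kK_k^{\theta_0}R_0K_k^{\theta_0\dagger}.$$ Then the sequential QFI of $N$ channels can achieve the Heisenberg limit by applying the same unitary control $U_c$ after each channel: there exists an input state $\rho_0$ (independent of $N$) such that, with $\rho_\theta^{(N)}=(\mathcal U_c\circ\mathcal E_\theta)^N(\rho_0)$ where $\mathcal U_c(\rho)=U_c\rho U_c^\dagger$, one has $\liminf_{N\to\infty}F^Q(\rho_\theta^{(N)})|_{\theta=\theta_0}/N^2>0$.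
   Context: Unital means $\mathcal E_\theta(I)=I$ (channels are trace preserving). For a $d\times d$ matrix $A$, $|A\rangle\rangle=(A_{11},A_{12},\dots,A_{dd})^T$ is its vectorization and $\langle\langle A|B\rangle\rangle=\operatorname{Tr}(A^\dagger B)$; then $T_\theta|\rho\rangle\rangle=|\mathcal E_\theta(\rho)\rangle\rangle$, and the controlled channel $\mathcal U_c\circ\mathcal E_\theta$ has Liouville representation $(U_c\otimes U_c^* )T_\theta$. $T_\theta^\dagger$ is the conjugate transpose of the $d^2\times d^2$ matrix $T_\theta$, and $\dot T_\theta=dT_\theta/d\theta$; $P$ and $PT_\theta^\dagger\dot T_\theta P$ are evaluated at $\theta=\theta_0$. $F^Q(\rho_\theta)=\operatorname{Tr}(\rho_\theta L_{\rho_\theta}^2)$ is the quantum Fisher information with symmetric logarithmic derivative defined by $2\dot\rho_\theta=\rho_\theta L_{\rho_\theta}+L_{\rho_\theta}\rho_\theta$. No ancilla is used. *)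

theory Defs
  imports "HOL-Analysis.Analysis"
begin

type_synonym 'n cmat = "complex ^'n ^'n"

definition ctrace :: "'n::finite cmat \<Rightarrow> complex" where
  "ctrace A = (\<Sum>i\<in>UNIV. A $ i $ i)"

definition cadj :: "complex ^'m ^'n \<Rightarrow> complex ^'n ^'m" where
  "cadj A = (\<chi> i j. cnj (A $ j $ i))"

definition cconj :: "complex ^'m ^'n \<Rightarrow> complex ^'m ^'n" where
  "cconj A = (\<chi> i j. cnj (A $ i $ j))"

definition hermitian :: "'n::finite cmat \<Rightarrow> bool" where
  "hermitian A \<longleftrightarrow> cadj A = A"

definition unitary :: "'n::finite cmat \<Rightarrow> bool" where
  "unitary U \<longleftrightarrow> cadj U ** U = mat 1 \<and> U ** cadj U = mat 1"

definition normal_op :: "'n::finite cmat \<Rightarrow> bool" where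
  "normal_op A \<longleftrightarrow> A ** cadj A = cadj A ** A"

definition psd :: "'n::finite cmat \<Rightarrow> bool" where
  "psd A \<longleftrightarrow> hermitian A \<and>
     (\<forall>x::complex^'n. 0 \<le> Re (\<Sum>i\<in>UNIV. cnj (x $ i) * (A *v x) $ i))"

definition density_matrix :: "'n::finite cmat \<Rightarrow> bool" where
  "density_matrix \<rho> \<longleftrightarrow> psd \<rho> \<and> ctrace \<rho> = 1"

definition vecm :: "'n::finite cmat \<Rightarrow> complex ^('n \<times> 'n)" where
  "vecm A = (\<chi> p. A $ fst p $ snd p)"

text \<open>Kronecker product, consistent with vecm: (A \<otimes> B) vecm X = vecm (A X B^T).\<close>
definition kron :: "'n::finite cmat \<Rightarrow> 'n cmat \<Rightarrow> complex ^('n \<times> 'n) ^('n \<times> 'n)" where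
  "kron A B = (\<chi> p q. A $ fst p $ fst q * B $ snd p $ snd q)"

definition kraus_apply :: "('k::finite \<Rightarrow> 'n::finite cmat) \<Rightarrow> 'n cmat \<Rightarrow> 'n cmat" where
  "kraus_apply K \<rho> = (\<Sum>k\<in>UNIV. K k ** \<rho> ** cadj (K k))"

definition liouville :: "('k::finite \<Rightarrow> 'n::finite cmat) \<Rightarrow> complex ^('n \<times> 'n) ^('n \<times> 'n)" where
  "liouville K = (\<Sum>k\<in>UNIV. kron (K k) (cconj (K k)))"

definition unital_channel :: "('k::finite \<Rightarrow> 'n::finite cmat) \<Rightarrow> bool" where
  "unital_channel K \<longleftrightarrow> (\<Sum>k\<in>UNIV. cadj (K k) ** K k) = mat 1 \<and>
                         (\<Sum>k\<in>UNIV. K k ** cadj (K k)) = mat 1"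

text \<open>Quantum Fisher information Tr(rho L^2), L a Hermitian SLD: 2 drho = rho L + L rho.
  This value does not depend on the choice of Hermitian solution L.\<close>
definition qfi_sld :: "'n::finite cmat \<Rightarrow> 'n cmat \<Rightarrow> real" where
  "qfi_sld \<rho> d\<rho> = (let L = (SOME L. hermitian L \<and> d\<rho> + d\<rho> = \<rho> ** L + L ** \<rho>)
                     in Re (ctrace (\<rho> ** L ** L)))"

definition QFI :: "(real \<Rightarrow> 'n::finite cmat) \<Rightarrow> real \<Rightarrow> real" where
  "QFI \<rho>f \<theta>0 = qfi_sld (\<rho>f \<theta>0) (vector_derivative \<rho>f (at \<theta>0))"

end

theory Submission
  imports Defs
begin

text \<open>
  Let \<open>V = U\<^sub>c \<otimes> U\<^sub>c\<^sup>*\<close>, so that \<open>S = V T\<^sub>\<theta>\<^sub>0\<close> is the Liouville matrix of the controlled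
  channel at \<open>\<theta>\<^sub>0\<close>. If \<open>|X\<rangle>\<rangle>\<close> lies in \<open>\<P>\<close> and is fixed by \<open>S\<close>, then \<open>T\<^sub>\<theta>\<^sub>0\<close> acts on it
  as the inverse of the unitary \<open>V\<close>, whence also \<open>\<langle>\<langle>X| S = \<langle>\<langle>X|\<close>. For such a Hermitian
  observable \<open>Q\<close> and a probe state \<open>\<rho>\<^sub>0\<close> fixed by \<open>S\<close>, differentiating the \<open>N\<close>-fold
  composition gives \<open>tr (Q \<partial>\<rho>\<^sub>N) = N \<langle>\<langle>Q| V \<partial>T |\<rho>\<^sub>0\<rangle>\<rangle>\<close>, and the Cauchy--Schwarz bound
  \<open>tr (Q \<partial>\<rho>)\<^sup>2 \<le> tr (Q \<rho> Q) F\<^sup>Q(\<rho>)\<close> turns this linear growth into \<open>F\<^sup>Q \<ge> c N\<^sup>2\<close>.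

  The control condition makes \<open>R\<^sub>0\<close> and \<open>R\<^sub>0\<^sup>\<dagger>\<close> such fixed matrices, and polarization turns
  \<open>\<langle>\<langle>R\<^sub>0| G |R\<^sub>0\<rangle>\<rangle> = \<mu> \<parallel>R\<^sub>0\<parallel>\<^sup>2 \<noteq> 0\<close>, where \<open>G = P T\<^sup>\<dagger> \<partial>T P\<close>, into Hermitian fixed matrices
  \<open>Q\<close>, \<open>H\<close> with \<open>\<langle>\<langle>Q| G |H\<rangle>\<rangle> \<noteq> 0\<close>. The probe is the maximally mixed state tilted by a
  small multiple \<open>\<epsilon>\<close> of \<open>H\<close>: it is fixed by \<open>S\<close> because unitality fixes the identity, and
  \<open>\<langle>\<langle>Q| V \<partial>T |\<rho>\<^sub>0\<rangle>\<rangle> = \<epsilon> \<langle>\<langle>Q| G |H\<rangle>\<rangle>\<close>.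
\<close>

section \<open>Matrices, vectorization and the Liouville representation\<close>

definition cinner :: "complex^'m::finite \<Rightarrow> complex^'m \<Rightarrow> complex" where
  "cinner u v = (\<Sum>p\<in>UNIV. cnj (u $ p) * v $ p)"

definition unvec :: "complex^('n::finite \<times> 'n) \<Rightarrow> 'n cmat" where
  "unvec v = (\<chi> i j. v $ (i, j))"

lemma matrix_add_rdistrib: "(A + B) ** C = A ** C + B ** (C :: 'a::semiring_1^'p^'n)"
  by (simp add: vec_eq_iff matrix_matrix_mult_def sum.distrib distrib_right)

lemma cadj_cadj [simp]: "cadj (cadj A) = A"
  by (simp add: cadj_def vec_eq_iff)

lemma cadj_mult: "cadj (A ** B) = cadj B ** cadj (A :: complex^'n::finite^'m)"
  by (simp add: cadj_def vec_eq_iff matrix_matrix_mult_def mult.commute)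

lemma cadj_add: "cadj (A + B) = cadj A + cadj B"
  by (simp add: cadj_def vec_eq_iff)

lemma cadj_diff: "cadj (A - B) = cadj A - cadj B"
  by (simp add: cadj_def vec_eq_iff)

lemma cadj_scaleR: "cadj (r *\<^sub>R A) = r *\<^sub>R cadj A"
  by (simp add: cadj_def vec_eq_iff)

lemma cadj_mat: "cadj (mat c :: 'n::finite cmat) = mat (cnj c)"
  by (simp add: cadj_def vec_eq_iff mat_def)

lemma cadj_sum: "finite S \<Longrightarrow> cadj (\<Sum>k\<in>S. f k) = (\<Sum>k\<in>S. cadj (f k))"
  by (induction S rule: finite_induct) (auto simp: cadj_add cadj_def vec_eq_iff)

lemma bounded_linear_cadj: "bounded_linear (cadj :: 'n::finite cmat \<Rightarrow> 'n cmat)"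
  unfolding linear_conv_bounded_linear[symmetric]
  by (rule linearI) (simp_all add: cadj_add cadj_scaleR)

lemma ctrace_cadj: "ctrace (cadj A) = cnj (ctrace A)"
  by (simp add: ctrace_def cadj_def)

lemma ctrace_mult_commute: "ctrace (A ** B) = ctrace (B ** (A :: complex^'n::finite^'m))"
  unfolding ctrace_def matrix_matrix_mult_def
  by (simp, subst sum.swap, simp add: mult.commute)

lemma ctrace_add: "ctrace (A + B) = ctrace A + ctrace B"
  by (simp add: ctrace_def sum.distrib)

lemma ctrace_diff: "ctrace (A - B) = ctrace A - ctrace B"
  by (simp add: ctrace_def sum_subtractf)

lemma ctrace_scaleR: "ctrace (r *\<^sub>R A) = r *\<^sub>R ctrace A"
  by (simp add: ctrace_def scaleR_sum_right)

lemma ctrace_mat: "ctrace (mat c :: 'n::finite cmat) = of_nat CARD('n) * c"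
  by (simp add: ctrace_def mat_def)

lemma Im_ctrace_hermitian_mult: "hermitian A \<Longrightarrow> hermitian B \<Longrightarrow> Im (ctrace (A ** B)) = 0"
proof -
  assume "hermitian A" "hermitian B"
  then have "cnj (ctrace (A ** B)) = ctrace (B ** A)"
    by (simp flip: ctrace_cadj add: cadj_mult hermitian_def)
  also have "\<dots> = ctrace (A ** B)"
    by (rule ctrace_mult_commute)
  finally show ?thesis
    by (metis cnj.sel(2) neg_equal_zero)
qed

lemma vecm_unvec [simp]: "vecm (unvec v) = v"
  by (simp add: vecm_def unvec_def vec_eq_iff)

lemma unvec_vecm [simp]: "unvec (vecm A) = A"
  by (simp add: vecm_def unvec_def vec_eq_iff)

lemma vecm_inject: "vecm A = vecm B \<longleftrightarrow> A = B"
  by (metis unvec_vecm)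

lemma vecm_add: "vecm (A + B) = vecm A + vecm B"
  by (simp add: vecm_def vec_eq_iff)

lemma vecm_diff: "vecm (A - B) = vecm A - vecm B"
  by (simp add: vecm_def vec_eq_iff)

lemma vecm_mat_mult: "vecm (mat c ** A) = c *s vecm A"
  by (simp add: vecm_def vec_eq_iff matrix_matrix_mult_def mat_def if_distrib if_distribR
      cong: if_cong)

lemma vecm_sum: "finite S \<Longrightarrow> vecm (\<Sum>k\<in>S. f k) = (\<Sum>k\<in>S. vecm (f k))"
  by (induction S rule: finite_induct) (auto simp: vecm_add vecm_def vec_eq_iff)

lemma bounded_linear_unvec: "bounded_linear (unvec :: complex^('n::finite \<times> 'n) \<Rightarrow> 'n cmat)"
  unfolding linear_conv_bounded_linear[symmetric]
  by (rule linearI) (simp_all add: unvec_def vec_eq_iff)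

lemma sum_UNIV_prod:
  "(\<Sum>p\<in>(UNIV::('a::finite \<times> 'b::finite) set). f p) = (\<Sum>a\<in>UNIV. \<Sum>b\<in>UNIV. f (a, b))"
  by (simp add: sum.cartesian_product UNIV_Times_UNIV[symmetric] del: UNIV_Times_UNIV)

lemma kron_cconj_vecm: "kron A (cconj A) *v vecm X = vecm (A ** X ** cadj A)"
proof -
  have "(kron A (cconj A) *v vecm X) $ (i, j) = vecm (A ** X ** cadj A) $ (i, j)" for i j
    unfolding kron_def cconj_def cadj_def vecm_def matrix_vector_mult_def matrix_matrix_mult_def
    by (simp add: sum_UNIV_prod sum_distrib_left sum_distrib_right mult_ac, subst sum.swap, simp)
  then show ?thesis by (simp add: vec_eq_iff)
qed

lemma cadj_kron_cconj: "cadj (kron A (cconj A)) = kron (cadj A) (cconj (cadj A))"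
  by (simp add: kron_def cconj_def cadj_def vec_eq_iff)

lemma matrix_vector_mult_sum_left:
  "finite S \<Longrightarrow> (\<Sum>k\<in>S. M k) *v x = (\<Sum>k\<in>S. M k *v x)"
  by (induction S rule: finite_induct) (auto simp: matrix_vector_mult_add_rdistrib)

lemma matrix_vector_mult_sum_right:
  "finite S \<Longrightarrow> M *v (\<Sum>k\<in>S. x k) = (\<Sum>k\<in>S. M *v x k)"
  by (induction S rule: finite_induct) (auto simp: matrix_vector_right_distrib)

lemma liouville_vecm: "liouville K *v vecm X = vecm (kraus_apply K X)"
  by (simp add: liouville_def kraus_apply_def matrix_vector_mult_sum_left kron_cconj_vecm vecm_sum)

lemma cadj_liouville: "cadj (liouville K) = liouville (\<lambda>k. cadj (K k))"
  unfolding liouville_def by (simp add: cadj_sum cadj_kron_cconj)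

lemma kraus_apply_cadj: "kraus_apply K (cadj X) = cadj (kraus_apply K X)"
  unfolding kraus_apply_def by (simp add: cadj_sum cadj_mult matrix_mul_assoc)

lemma kraus_apply_id: "unital_channel K \<Longrightarrow> kraus_apply K (mat 1) = mat 1"
  unfolding unital_channel_def kraus_apply_def by simp

lemma cinner_add_left: "cinner (u + v) w = cinner u w + cinner v w"
  by (simp add: cinner_def sum.distrib distrib_right)

lemma cinner_add_right: "cinner w (u + v) = cinner w u + cinner w v"
  by (simp add: cinner_def sum.distrib distrib_left)

lemma cinner_diff_left: "cinner (u - v) w = cinner u w - cinner v w"
  by (simp add: cinner_def sum_subtractf left_diff_distrib)

lemma cinner_diff_right: "cinner w (u - v) = cinner w u - cinner w v"
  by (simp add: cinner_def sum_subtractf right_diff_distrib)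

lemma cinner_scale_left: "cinner (c *s u) w = cnj c * cinner u w"
  by (simp add: cinner_def sum_distrib_left mult_ac)

lemma cinner_scale_right: "cinner w (c *s u) = c * cinner w u"
  by (simp add: cinner_def sum_distrib_left mult_ac)

lemma cinner_scaleR_right: "cinner u (r *\<^sub>R v) = of_real r * cinner u v"
  by (simp add: cinner_def sum_distrib_left) (simp add: scaleR_conv_of_real mult_ac)

lemma cinner_sum_right: "cinner u (\<Sum>k\<in>S. v k) = (\<Sum>k\<in>S. cinner u (v k))"
  by (simp add: cinner_def sum_component sum_distrib_left, subst sum.swap, simp)

lemma cinner_zero_right [simp]: "cinner u 0 = 0"
  by (simp add: cinner_def)

lemmas cinner_simps = cinner_add_left cinner_add_right cinner_diff_left cinner_diff_right
  cinner_scale_left cinner_scale_right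

lemma Re_cinner: "Re (cinner u v) = inner u v"
  by (simp add: cinner_def inner_vec_def inner_complex_def Re_sum)

lemma cinner_self_eq_0: "cinner u u = 0 \<longleftrightarrow> u = 0"
proof
  assume "cinner u u = 0"
  then have "inner u u = 0"
    by (metis Re_cinner zero_complex.sel(1))
  then show "u = 0" by simp
qed simp

lemma cinner_matrix_adj: "cinner u (M *v v) = cinner (cadj M *v u) v"
  unfolding cinner_def matrix_vector_mult_def cadj_def
  by (simp add: sum_distrib_left sum_distrib_right mult_ac, subst sum.swap, simp)

lemma cinner_vecm: "cinner (vecm A) (vecm B) = ctrace (cadj A ** B)"
  by (simp add: cinner_def vecm_def ctrace_def cadj_def matrix_matrix_mult_def sum_UNIV_prod,
      subst sum.swap, simp)

lemma ctrace_hermitian_unvec: "hermitian Q \<Longrightarrow> ctrace (Q ** unvec g) = cinner (vecm Q) g"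
  by (metis cinner_vecm hermitian_def vecm_unvec)

lemma bounded_bilinear_matrix_vector_mult:
  "bounded_bilinear (\<lambda>(A::complex^'n::finite^'m::finite) x. A *v x)"
  unfolding bilinear_conv_bounded_bilinear[symmetric] bilinear_def
  by (auto intro!: linearI simp: algebra_simps vec_eq_iff matrix_vector_mult_def scaleR_sum_right
      sum.distrib)

lemmas complex_matrix_vector_mult_scaleR_left =
  bounded_bilinear.scaleR_left[OF bounded_bilinear_matrix_vector_mult]

lemmas complex_matrix_vector_mult_scaleR_right =
  bounded_bilinear.scaleR_right[OF bounded_bilinear_matrix_vector_mult]

lemma hermitian_vector_derivative:
  assumes "\<And>t. hermitian (f t)" and f: "(f has_vector_derivative f') (at x)"
  shows "hermitian f'"
proof -
  have "((\<lambda>t. cadj (f t)) has_vector_derivative cadj f') (at x)"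
    using bounded_linear.has_vector_derivative[OF bounded_linear_cadj f] .
  then have "(f has_vector_derivative cadj f') (at x)"
    using assms(1) by (simp add: hermitian_def)
  then show ?thesis
    using f vector_derivative_unique_at by (metis hermitian_def)
qed

lemma hermitian_add_cadj: "hermitian (R + cadj R)"
  by (simp add: hermitian_def cadj_add add.commute)

lemma hermitian_imaginary_part: "hermitian (mat \<i> ** (R - cadj (R :: 'n::finite cmat)))"
  by (simp add: hermitian_def cadj_def vec_eq_iff matrix_matrix_mult_def mat_def
      if_distrib if_distribR algebra_simps cong: if_cong)

text \<open>Polarization: \<open>2 R = (R + R\<^sup>\<dagger>) - \<i> \<cdot> \<i> (R - R\<^sup>\<dagger>)\<close>, so a sesquilinear form that is nonzero on
  \<open>R\<close> is nonzero on some pair of Hermitian parts of \<open>R\<close>.\<close>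
lemma cinner_hermitian_parts_nonzero:
  fixes R :: "'n::finite cmat" and G :: "complex^('n \<times> 'n)^('n \<times> 'n)"
  defines "A \<equiv> R + cadj R" and "B \<equiv> mat \<i> ** (R - cadj R)"
  assumes nz: "cinner (vecm R) (G *v vecm R) \<noteq> 0"
  shows "\<exists>X\<in>{A, B}. \<exists>Y\<in>{A, B}. cinner (vecm X) (G *v vecm Y) \<noteq> 0"
proof (rule ccontr)
  assume "\<not> ?thesis"
  then have zero: "cinner (vecm X) (G *v vecm Y) = 0" if "X \<in> {A, B}" "Y \<in> {A, B}" for X Y
    using that by blast
  have R: "2 *s vecm R = vecm A - \<i> *s vecm B"
    by (simp add: A_def B_def vecm_add vecm_diff vecm_mat_mult vec_eq_iff algebra_simps)
  have "4 * cinner (vecm R) (G *v vecm R) = cinner (2 *s vecm R) (G *v (2 *s vecm R))"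
    by (simp add: cinner_simps vector_scalar_commute)
  also have "\<dots> = 0"
    unfolding R using zero
    by (simp add: cinner_simps vector_scalar_commute matrix_vector_mult_diff_distrib)
  finally show False
    using nz by simp
qed

section \<open>Symmetric logarithmic derivative and quantum Fisher information\<close>

definition posdef :: "'n::finite cmat \<Rightarrow> bool" where
  "posdef A \<longleftrightarrow> hermitian A \<and> (\<forall>x. x \<noteq> 0 \<longrightarrow> 0 < Re (cinner x (A *v x)))"

lemma psd_iff_cinner: "psd A \<longleftrightarrow> hermitian A \<and> (\<forall>x. 0 \<le> Re (cinner x (A *v x)))"
  by (simp add: psd_def cinner_def)

lemma posdef_imp_psd:
  assumes "posdef A"
  shows "psd A"
proof -
  have "0 \<le> Re (cinner x (A *v x))" for x
    using assms by (cases "x = 0") (auto simp: posdef_def intro: less_imp_le)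
  then show ?thesis
    using assms by (simp add: psd_iff_cinner posdef_def)
qed

lemma ctrace_sandwich_columns:
  "ctrace (cadj X ** A ** X) = (\<Sum>j\<in>UNIV. cinner (column j X) (A *v column j X))"
  unfolding ctrace_def cinner_def column_def cadj_def matrix_matrix_mult_def matrix_vector_mult_def
  by (simp add: sum_distrib_left sum_distrib_right mult_ac)
    (rule sum.cong[OF refl], subst sum.swap, simp add: mult_ac)

lemma psd_ctrace_sandwich_nonneg: "psd A \<Longrightarrow> 0 \<le> Re (ctrace (cadj X ** A ** X))"
  unfolding ctrace_sandwich_columns Re_sum psd_iff_cinner by (auto intro: sum_nonneg)

lemma posdef_ctrace_sandwich_eq_0:
  assumes A: "posdef A" and tr: "Re (ctrace (cadj X ** A ** X)) = 0"
  shows "X = 0"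
proof -
  have "\<forall>j\<in>UNIV. 0 \<le> Re (cinner (column j X) (A *v column j X))"
    using posdef_imp_psd[OF A] by (simp add: psd_iff_cinner)
  then have "\<forall>j. Re (cinner (column j X) (A *v column j X)) = 0"
    using tr unfolding ctrace_sandwich_columns Re_sum by (subst (asm) sum_nonneg_eq_0_iff) auto
  then have "\<forall>j. column j X = 0"
    using A unfolding posdef_def by (metis less_irrefl)
  then show "X = 0"
    by (simp add: vec_eq_iff column_def)
qed

lemma linear_anticommutator: "linear (\<lambda>L. A ** L + L ** (A :: 'n::finite cmat))"
  by (rule linearI) (simp_all add: vec_eq_iff matrix_matrix_mult_def sum.distrib algebra_simps
      scaleR_sum_right)

lemma anticommutator_inj:
  assumes A: "posdef A"
  shows "inj (\<lambda>L. A ** L + L ** A)"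
proof -
  have "L = 0" if L: "A ** L + L ** A = 0" for L
  proof -
    let ?q = "\<lambda>X. Re (ctrace (cadj X ** A ** X))"
    have "ctrace (cadj L ** A ** L) + ctrace (cadj (cadj L) ** A ** cadj L)
        = ctrace (cadj L ** (A ** L + L ** A))"
      by (simp add: matrix_add_ldistrib ctrace_add matrix_mul_assoc ctrace_mult_commute[of "L ** A"])
    also have "\<dots> = 0"
      using L by (simp add: ctrace_def)
    finally have "?q L + ?q (cadj L) = 0"
      by (metis plus_complex.sel(1) zero_complex.sel(1))
    moreover have "0 \<le> ?q L" "0 \<le> ?q (cadj L)"
      using psd_ctrace_sandwich_nonneg[OF posdef_imp_psd[OF A]] by blast+
    ultimately show "L = 0"
      using posdef_ctrace_sandwich_eq_0[OF A] by (metis add_nonneg_eq_0_iff)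
  qed
  then show ?thesis
    using linear_inj_iff_eq_0[OF linear_anticommutator[of A]] by blast
qed

text \<open>The symmetric logarithmic derivative exists because the anticommutator with a positive
  definite matrix is a linear bijection commuting with the adjoint.\<close>
lemma sld_exists:
  assumes A: "posdef A" and dA: "hermitian dA"
  shows "\<exists>L. hermitian L \<and> dA + dA = A ** L + L ** A"
proof -
  let ?f = "\<lambda>L. A ** L + L ** A"
  have "surj ?f"
    using linear_injective_imp_surjective[OF linear_anticommutator anticommutator_inj[OF A]] by simp
  then obtain L where L: "?f L = dA + dA"
    using surjD[of ?f "dA + dA"] by metis
  have "?f (cadj L) = cadj (?f L)"
    using A by (simp add: posdef_def hermitian_def cadj_add cadj_mult add.commute)
  also have "\<dots> = dA + dA"
    using dA unfolding hermitian_def by (simp only: L cadj_add)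
  finally have "?f (cadj L) = ?f L"
    using L by simp
  then have "cadj L = L"
    by (rule injD[OF anticommutator_inj[OF A]])
  then show ?thesis
    using L by (auto simp: hermitian_def)
qed

lemma discriminant_le_if_quadratic_nonneg:
  fixes a b c :: real
  assumes nonneg: "\<And>t. 0 \<le> a + 2 * t * b + t\<^sup>2 * c" and "0 \<le> c"
  shows "b\<^sup>2 \<le> a * c"
proof (cases "c = 0")
  case True
  have "b = 0"
  proof (rule ccontr)
    assume "b \<noteq> 0"
    then show False
      using nonneg[of "- (a + 1) / (2 * b)"] True by (simp add: field_simps)
  qed
  then show ?thesis
    using True by simp
next
  case False
  then have "c > 0"
    using \<open>0 \<le> c\<close> by simp
  then show ?thesis
    using nonneg[of "- b / c"] by (simp add: field_simps power2_eq_square)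
qed

text \<open>Cauchy--Schwarz for the real form \<open>(X, Y) \<mapsto> Re tr (X A Y)\<close>, evaluated at the observable
  \<open>Q\<close> and the logarithmic derivative \<open>L\<close>.\<close>
lemma sld_cauchy_schwarz:
  fixes A :: "'n::finite cmat"
  assumes A: "psd A" and L: "hermitian L" and sld: "dA + dA = A ** L + L ** A"
    and Q: "hermitian Q"
  shows "(Re (ctrace (Q ** dA)))\<^sup>2 \<le> Re (ctrace (Q ** A ** Q)) * Re (ctrace (A ** L ** L))"
proof -
  define b where "b X Y = Re (ctrace (X ** A ** Y))" for X Y :: "'n cmat"
  have hA: "hermitian A"
    using A by (simp add: psd_def)
  have b_sym: "b L Q = b Q L"
  proof -
    have "cadj (Q ** A ** L) = L ** A ** Q"
      using hA L Q by (simp add: cadj_mult hermitian_def matrix_mul_assoc)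
    then show ?thesis
      by (metis b_def ctrace_cadj cnj.sel(1))
  qed
  have "2 * ctrace (Q ** dA) = ctrace (Q ** (A ** L + L ** A))"
    by (simp add: mult_2 ctrace_add[symmetric] matrix_add_ldistrib[symmetric] sld)
  also have "\<dots> = ctrace (Q ** A ** L) + ctrace (Q ** (L ** A))"
    by (simp add: matrix_add_ldistrib ctrace_add matrix_mul_assoc)
  also have "ctrace (Q ** (L ** A)) = ctrace (L ** A ** Q)"
    by (rule ctrace_mult_commute)
  finally have "Re (2 * ctrace (Q ** dA)) = Re (ctrace (Q ** A ** L) + ctrace (L ** A ** Q))"
    by (rule arg_cong)
  then have "2 * Re (ctrace (Q ** dA)) = b Q L + b L Q"
    by (simp add: b_def)
  then have tr_dA: "Re (ctrace (Q ** dA)) = b Q L"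
    using b_sym by simp
  have tr_L: "Re (ctrace (A ** L ** L)) = b L L"
    unfolding b_def by (metis ctrace_mult_commute matrix_mul_assoc)
  have "0 \<le> b Q Q + 2 * t * b Q L + t\<^sup>2 * b L L" for t
  proof -
    have "0 \<le> Re (ctrace (cadj (Q + t *\<^sub>R L) ** A ** (Q + t *\<^sub>R L)))"
      by (rule psd_ctrace_sandwich_nonneg[OF A])
    also have "cadj (Q + t *\<^sub>R L) = Q + t *\<^sub>R L"
      using Q L by (simp add: cadj_add cadj_scaleR hermitian_def)
    also have "Re (ctrace ((Q + t *\<^sub>R L) ** A ** (Q + t *\<^sub>R L)))
        = b Q Q + t * b Q L + t * b L Q + t\<^sup>2 * b L L"
      by (simp add: b_def matrix_add_ldistrib matrix_add_rdistrib scalar_matrix_assoc[symmetric]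
          matrix_scalar_ac ctrace_add ctrace_scaleR power2_eq_square algebra_simps)
    finally show ?thesis
      using b_sym by simp
  qed
  moreover have "0 \<le> b L L"
    using psd_ctrace_sandwich_nonneg[OF A, of L] L by (simp add: b_def hermitian_def)
  ultimately have "(b Q L)\<^sup>2 \<le> b Q Q * b L L"
    by (rule discriminant_le_if_quadratic_nonneg)
  then show ?thesis
    using tr_dA tr_L by (simp add: b_def)
qed

lemma qfi_sld_lower_bound:
  assumes A: "posdef A" and dA: "hermitian dA" and Q: "hermitian Q"
  shows "(Re (ctrace (Q ** dA)))\<^sup>2 \<le> Re (ctrace (Q ** A ** Q)) * qfi_sld A dA"
proof -
  define L where "L = (SOME L. hermitian L \<and> dA + dA = A ** L + L ** A)"
  have L: "hermitian L \<and> dA + dA = A ** L + L ** A"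
    unfolding L_def by (rule someI_ex) (rule sld_exists[OF A dA])
  have "qfi_sld A dA = Re (ctrace (A ** L ** L))"
    by (simp add: qfi_sld_def L_def Let_def)
  then show ?thesis
    using sld_cauchy_schwarz[OF posdef_imp_psd[OF A] _ _ Q] L by simp
qed

lemma liminf_quadratic_growth_pos:
  fixes F :: "nat \<Rightarrow> real"
  assumes bound: "\<And>N. (real N * c)\<^sup>2 \<le> \<beta> * F N" and "c \<noteq> 0" and "0 \<le> \<beta>"
  shows "0 < liminf (\<lambda>N. ereal (F N / (real N)\<^sup>2))"
proof -
  have "0 < \<beta>"
    using bound[of 1] \<open>c \<noteq> 0\<close> \<open>0 \<le> \<beta>\<close> by (cases "\<beta> = 0") auto
  define \<kappa> where "\<kappa> = c\<^sup>2 / \<beta>"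
  have "\<kappa> > 0"
    using \<open>0 < \<beta>\<close> \<open>c \<noteq> 0\<close> by (simp add: \<kappa>_def)
  have "\<kappa> \<le> F N / (real N)\<^sup>2" if "N \<ge> 1" for N
    using bound[of N] that \<open>0 < \<beta>\<close>
    by (simp add: \<kappa>_def field_simps power_mult_distrib)
  then have "ereal \<kappa> \<le> liminf (\<lambda>N. ereal (F N / (real N)\<^sup>2))"
    by (intro Liminf_bounded) (auto simp: eventually_sequentially)
  then show ?thesis
    using \<open>\<kappa> > 0\<close> by (meson ereal_less(2) less_le_trans)
qed

section \<open>Probe states near the maximally mixed state\<close>

lemma mat_of_real_mult_vector: "mat (of_real r) *v x = r *\<^sub>R (x :: complex^'n::finite)"
  by (simp add: vec_eq_iff matrix_vector_mult_def mat_def if_distrib if_distribR cong: if_cong)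
    (simp add: scaleR_conv_of_real)

lemma posdef_maximally_mixed_perturbation:
  fixes H :: "'n::finite cmat"
  assumes H: "hermitian H"
  obtains \<epsilon> where "\<epsilon> > 0" "posdef (mat (1 / of_nat CARD('n)) + \<epsilon> *\<^sub>R H)"
proof -
  define n where "n = real CARD('n)"
  obtain C where C: "C > 0" "\<And>x. norm (H *v x) \<le> norm x * C"
    using bounded_linear.pos_bounded[OF matrix_vector_mul_bounded_linear[of H]] by blast
  define \<epsilon> where "\<epsilon> = 1 / (2 * n * C)"
  have "\<epsilon> > 0"
    using C by (simp add: \<epsilon>_def n_def)
  have "0 < Re (cinner x ((mat (1 / of_nat CARD('n)) + \<epsilon> *\<^sub>R H) *v x))" if "x \<noteq> 0" for x
  proof -
    have "\<bar>inner x (H *v x)\<bar> \<le> norm x * (norm x * C)"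
      using Cauchy_Schwarz_ineq2[of x "H *v x"] mult_left_mono[OF C(2)[of x] norm_ge_zero[of x]]
      by linarith
    then have "\<epsilon> * - inner x (H *v x) \<le> \<epsilon> * (norm x * (norm x * C))"
      using \<open>\<epsilon> > 0\<close> by (intro mult_left_mono) (simp_all add: abs_le_iff)
    also have "\<dots> = (norm x)\<^sup>2 / (2 * n)"
      using C by (simp add: \<epsilon>_def power2_eq_square)
    also have "\<dots> < (norm x)\<^sup>2 / n"
      using that by (simp add: n_def divide_strict_left_mono)
    finally have "0 < (norm x)\<^sup>2 / n + \<epsilon> * inner x (H *v x)"
      by linarith
    also have "(norm x)\<^sup>2 / n + \<epsilon> * inner x (H *v x)
        = Re (cinner x ((mat (1 / of_nat CARD('n)) + \<epsilon> *\<^sub>R H) *v x))"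
      using mat_of_real_mult_vector[of "1 / n" x]
      by (simp add: Re_cinner matrix_vector_mult_add_rdistrib complex_matrix_vector_mult_scaleR_left
          n_def inner_add_right power2_norm_eq_inner divide_inverse)
    finally show ?thesis .
  qed
  then have "posdef (mat (1 / of_nat CARD('n)) + \<epsilon> *\<^sub>R H)"
    using H by (simp add: posdef_def hermitian_def cadj_add cadj_scaleR cadj_mat)
  with \<open>\<epsilon> > 0\<close> show thesis
    by (rule that)
qed

definition tilted_state :: "real \<Rightarrow> 'n::finite cmat \<Rightarrow> 'n cmat" where
  "tilted_state \<epsilon> H = mat (1 / of_nat CARD('n)) + \<epsilon> *\<^sub>R (H - mat (ctrace H / of_nat CARD('n)))"

lemma ctrace_tilted_state: "ctrace (tilted_state \<epsilon> H) = 1"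
  by (simp add: tilted_state_def ctrace_add ctrace_scaleR ctrace_diff ctrace_mat)

lemma vecm_tilted_state:
  "vecm (tilted_state \<epsilon> (H :: 'n::finite cmat))
     = \<epsilon> *\<^sub>R vecm H + ((1 - of_real \<epsilon> * ctrace H) / of_nat CARD('n)) *s vecm (mat 1)"
  by (simp add: tilted_state_def vecm_def mat_def vec_eq_iff)
    (simp add: scaleR_conv_of_real field_simps)

lemma tilted_state_density:
  fixes H :: "'n::finite cmat"
  assumes H: "hermitian H"
  obtains \<epsilon> where "\<epsilon> > 0" "posdef (tilted_state \<epsilon> H)" "density_matrix (tilted_state \<epsilon> H)"
proof -
  have "cnj (ctrace H) = ctrace H"
    using H by (simp add: hermitian_def flip: ctrace_cadj)
  then have "hermitian (H - mat (ctrace H / of_nat CARD('n)))"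
    using H by (simp add: hermitian_def cadj_diff cadj_mat)
  then obtain \<epsilon> where "\<epsilon> > 0" and pd: "posdef (tilted_state \<epsilon> H)"
    unfolding tilted_state_def by (rule posdef_maximally_mixed_perturbation)
  moreover have "density_matrix (tilted_state \<epsilon> H)"
    using posdef_imp_psd[OF pd] by (simp add: density_matrix_def ctrace_tilted_state)
  ultimately show thesis
    by (rule that)
qed

section \<open>Derivative of an iterated parametrized linear map\<close>

lemma funpow_fixed_point: "f x = x \<Longrightarrow> (f ^^ n) x = x"
  by (induction n) simp_all

lemma has_vector_derivative_iterate_at_fixed_point:
  fixes T :: "real \<Rightarrow> complex^'m::finite^'m" and V :: "complex^'m^'m"
  assumes T: "(T has_vector_derivative D) (at \<theta>0)" and fixed: "V *v (T \<theta>0 *v x) = x"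
  shows "((\<lambda>\<theta>. ((\<lambda>y. V *v (T \<theta> *v y)) ^^ N) x) has_vector_derivative
           (\<Sum>j<N. ((\<lambda>y. V *v (T \<theta>0 *v y)) ^^ j) (V *v (D *v x)))) (at \<theta>0)"
proof (induction N)
  case 0
  show ?case
    by (simp add: has_vector_derivative_const)
next
  case (Suc N)
  let ?S = "\<lambda>y. V *v (T \<theta>0 *v y)"
  have at_\<theta>0: "(?S ^^ N) x = x"
    using fixed by (rule funpow_fixed_point)
  have "((\<lambda>\<theta>. T \<theta> *v ((\<lambda>y. V *v (T \<theta> *v y)) ^^ N) x) has_vector_derivative
      T \<theta>0 *v (\<Sum>j<N. (?S ^^ j) (V *v (D *v x))) + D *v x) (at \<theta>0)"
    using bounded_bilinear.has_vector_derivative[OF bounded_bilinear_matrix_vector_mult T Suc.IH]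
    by (simp add: at_\<theta>0)
  from bounded_linear.has_vector_derivative[OF matrix_vector_mul_bounded_linear[of V] this]
  have "((\<lambda>\<theta>. ((\<lambda>y. V *v (T \<theta> *v y)) ^^ Suc N) x) has_vector_derivative
      ?S (\<Sum>j<N. (?S ^^ j) (V *v (D *v x))) + V *v (D *v x)) (at \<theta>0)"
    by (simp only: funpow.simps o_apply matrix_vector_right_distrib)
  moreover have "?S (\<Sum>j<N. (?S ^^ j) (V *v (D *v x))) = (\<Sum>j<N. (?S ^^ Suc j) (V *v (D *v x)))"
    by (simp add: matrix_vector_mult_sum_right)
  ultimately show ?case
    by (simp only: sum.lessThan_Suc_shift funpow_0 add.commute)
qed

lemma cinner_iterate_left_fixed:
  assumes "cadj S *v q = q"
  shows "cinner q (((\<lambda>y. S *v y) ^^ j) v) = cinner q v"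
  using assms by (induction j) (simp_all add: cinner_matrix_adj)

section \<open>The controlled channel\<close>

locale controlled_channel =
  fixes K :: "real \<Rightarrow> 'k::finite \<Rightarrow> 'n::finite cmat"
    and \<theta>0 :: real
    and P :: "complex^('n \<times> 'n)^('n \<times> 'n)"
    and Uc R0 :: "'n cmat"
    and \<mu> :: complex
  assumes unital: "\<And>\<theta>. unital_channel (K \<theta>)"
    and differentiable: "(\<lambda>t. liouville (K t)) differentiable (at \<theta>0)"
    and P_idem: "P ** P = P" and P_hermitian: "cadj P = P"
    and P_fixed_iff: "\<And>v. P *v v = v \<longleftrightarrow> (cadj (liouville (K \<theta>0)) ** liouville (K \<theta>0)) *v v = v"
    and Uc_unitary: "unitary Uc"
    and R0_nonzero: "vecm R0 \<noteq> 0" and \<mu>_nonzero: "\<mu> \<noteq> 0"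
    and R0_eigen: "(P ** cadj (liouville (K \<theta>0))
        ** vector_derivative (\<lambda>t. liouville (K t)) (at \<theta>0) ** P) *v vecm R0 = \<mu> *s vecm R0"
    and control: "cadj Uc ** R0 ** Uc = kraus_apply (K \<theta>0) R0"
begin

abbreviation T :: "real \<Rightarrow> complex^('n \<times> 'n)^('n \<times> 'n)" where
  "T t \<equiv> liouville (K t)"

definition D :: "complex^('n \<times> 'n)^('n \<times> 'n)" where
  "D = vector_derivative T (at \<theta>0)"

definition V :: "complex^('n \<times> 'n)^('n \<times> 'n)" where
  "V = kron Uc (cconj Uc)"

definition G :: "complex^('n \<times> 'n)^('n \<times> 'n)" where
  "G = P ** cadj (T \<theta>0) ** D ** P"

abbreviation S :: "complex^('n \<times> 'n)^('n \<times> 'n)" where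
  "S \<equiv> V ** T \<theta>0"

definition ctrl_channel :: "real \<Rightarrow> 'n cmat \<Rightarrow> 'n cmat" where
  "ctrl_channel t = (\<lambda>\<rho>. Uc ** kraus_apply (K t) \<rho> ** cadj Uc)"

definition stable :: "'n cmat \<Rightarrow> bool" where
  "stable X \<longleftrightarrow> S *v vecm X = vecm X \<and> P *v vecm X = vecm X"

lemma T_has_derivative: "(T has_vector_derivative D) (at \<theta>0)"
  using differentiable unfolding D_def by (simp add: vector_derivative_works)

lemma V_vecm: "V *v vecm X = vecm (Uc ** X ** cadj Uc)"
  by (simp add: V_def kron_cconj_vecm)

lemma cadj_V_vecm: "cadj V *v vecm X = vecm (cadj Uc ** X ** Uc)"
  using kron_cconj_vecm[of "cadj Uc" X] by (simp add: V_def cadj_kron_cconj)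

lemma cadj_V_V: "cadj V *v (V *v v) = v"
proof -
  have "cadj Uc ** (Uc ** X ** cadj Uc) ** Uc = (cadj Uc ** Uc) ** X ** (cadj Uc ** Uc)" for X
    by (simp add: matrix_mul_assoc)
  then have "cadj V *v (V *v vecm X) = vecm X" for X
    using Uc_unitary by (simp add: V_vecm cadj_V_vecm unitary_def)
  from this[of "unvec v"] show ?thesis
    by simp
qed

lemma vecm_ctrl_channel: "vecm (ctrl_channel t X) = V *v (T t *v vecm X)"
  by (simp add: ctrl_channel_def V_vecm liouville_vecm)

lemma S_vecm: "S *v vecm X = vecm (ctrl_channel \<theta>0 X)"
  by (simp add: vecm_ctrl_channel matrix_vector_mul_assoc)

lemma vecm_iterate_ctrl_channel:
  "vecm ((ctrl_channel t ^^ N) \<rho>) = ((\<lambda>y. V *v (T t *v y)) ^^ N) (vecm \<rho>)"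
  by (induction N) (simp_all add: vecm_ctrl_channel)

lemma ctrl_channel_cadj: "ctrl_channel t (cadj X) = cadj (ctrl_channel t X)"
  by (simp add: ctrl_channel_def cadj_mult kraus_apply_cadj matrix_mul_assoc)

lemma hermitian_iterate_ctrl_channel: "hermitian \<rho> \<Longrightarrow> hermitian ((ctrl_channel t ^^ N) \<rho>)"
  by (induction N) (simp_all add: hermitian_def flip: ctrl_channel_cadj)

lemma ctrl_channel_id: "ctrl_channel t (mat 1) = mat 1"
  using unital Uc_unitary by (simp add: ctrl_channel_def kraus_apply_id unitary_def)

text \<open>Unitality holds for every \<open>\<theta>\<close>, so \<open>T \<theta> |I\<rangle>\<rangle>\<close> is constant.\<close>
lemma D_vecm_id: "D *v vecm (mat 1) = 0"
proof -
  have "((\<lambda>t. T t *v vecm (mat 1)) has_vector_derivative D *v vecm (mat 1)) (at \<theta>0)"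
    using bounded_bilinear.has_vector_derivative[OF bounded_bilinear_matrix_vector_mult
        T_has_derivative has_vector_derivative_const] by simp
  moreover have "(\<lambda>t. T t *v vecm (mat 1)) = (\<lambda>t. vecm (mat 1))"
    using unital by (simp add: liouville_vecm kraus_apply_id)
  ultimately have "((\<lambda>t. vecm (mat 1)) has_vector_derivative D *v vecm (mat 1)) (at \<theta>0)"
    by simp
  from vector_derivative_unique_at[OF this has_vector_derivative_const] show ?thesis .
qed

lemma stable_add: "stable X \<Longrightarrow> stable Y \<Longrightarrow> stable (X + Y)"
  by (simp add: stable_def vecm_add matrix_vector_right_distrib)

lemma stable_diff: "stable X \<Longrightarrow> stable Y \<Longrightarrow> stable (X - Y)"
  by (simp add: stable_def vecm_diff matrix_vector_mult_diff_distrib)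

lemma stable_mat_mult: "stable X \<Longrightarrow> stable (mat c ** X)"
  by (simp add: stable_def vecm_mat_mult vector_scalar_commute)

lemma P_R0: "P *v vecm R0 = vecm R0"
proof -
  have "P ** G = G"
    by (simp add: G_def matrix_mul_assoc P_idem)
  then have "P *v (G *v vecm R0) = G *v vecm R0"
    by (simp add: matrix_vector_mul_assoc)
  then have "\<mu> *s (P *v vecm R0) = \<mu> *s vecm R0"
    using R0_eigen by (simp add: G_def D_def vector_scalar_commute)
  then show ?thesis
    using \<mu>_nonzero by (simp add: vec_eq_iff)
qed

lemma stable_R0: "stable R0"
proof -
  have "ctrl_channel \<theta>0 R0 = (Uc ** cadj Uc) ** R0 ** (Uc ** cadj Uc)"
    by (simp add: ctrl_channel_def control[symmetric] matrix_mul_assoc)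
  then show ?thesis
    using Uc_unitary P_R0 by (simp add: stable_def S_vecm unitary_def)
qed

text \<open>The fixed space of \<open>T\<^sup>\<dagger>T\<close> is closed under the adjoint because \<open>T\<^sup>\<dagger>T\<close> is itself a
  Hermiticity-preserving Kraus map.\<close>
lemma stable_cadj_R0: "stable (cadj R0)"
proof -
  let ?E = "\<lambda>X. kraus_apply (\<lambda>k. cadj (K \<theta>0 k)) (kraus_apply (K \<theta>0) X)"
  have TT: "(cadj (T \<theta>0) ** T \<theta>0) *v vecm X = vecm (?E X)" for X
    by (simp flip: matrix_vector_mul_assoc add: liouville_vecm cadj_liouville)
  have "vecm (?E R0) = vecm R0"
    using P_fixed_iff P_R0 TT by simp
  then have "(cadj (T \<theta>0) ** T \<theta>0) *v vecm (cadj R0) = vecm (cadj R0)"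
    by (simp add: TT vecm_inject kraus_apply_cadj)
  then have "P *v vecm (cadj R0) = vecm (cadj R0)"
    using P_fixed_iff by simp
  then show ?thesis
    using stable_R0 by (simp add: stable_def S_vecm vecm_inject ctrl_channel_cadj)
qed

lemma T_stable: "stable X \<Longrightarrow> T \<theta>0 *v vecm X = cadj V *v vecm X"
  unfolding stable_def by (metis cadj_V_V matrix_vector_mul_assoc)

lemma cadj_S_stable: "stable X \<Longrightarrow> cadj S *v vecm X = vecm X"
proof -
  assume X: "stable X"
  have "cadj S *v vecm X = cadj (T \<theta>0) *v (T \<theta>0 *v vecm X)"
    using T_stable[OF X] by (simp add: cadj_mult matrix_vector_mul_assoc)
  also have "\<dots> = vecm X"
    using X P_fixed_iff by (simp add: stable_def matrix_vector_mul_assoc)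
  finally show ?thesis .
qed

lemma cinner_V_D_stable:
  assumes Q: "stable Q" and H: "stable H"
  shows "cinner (vecm Q) (V *v (D *v vecm H)) = cinner (vecm Q) (G *v vecm H)"
proof -
  have "cinner (vecm Q) (V *v (D *v vecm H)) = cinner (cadj V *v vecm Q) (D *v vecm H)"
    by (rule cinner_matrix_adj)
  also have "\<dots> = cinner (T \<theta>0 *v vecm Q) (D *v (P *v vecm H))"
    using T_stable[OF Q] H by (simp add: stable_def)
  also have "\<dots> = cinner (vecm Q) (cadj (T \<theta>0) *v (D *v (P *v vecm H)))"
    by (simp add: cinner_matrix_adj)
  also have "\<dots> = cinner (P *v vecm Q) (cadj (T \<theta>0) *v (D *v (P *v vecm H)))"
    using Q by (simp add: stable_def)
  also have "\<dots> = cinner (vecm Q) (G *v vecm H)"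
    by (simp add: cinner_matrix_adj[of "vecm Q" P, unfolded P_hermitian, symmetric] G_def
        matrix_vector_mul_assoc matrix_mul_assoc)
  finally show ?thesis .
qed

lemma exists_stable_hermitian_pair:
  obtains Q H where "stable Q" "stable H" "hermitian Q" "hermitian H"
    "cinner (vecm Q) (G *v vecm H) \<noteq> 0"
proof -
  have "cinner (vecm R0) (G *v vecm R0) = \<mu> * cinner (vecm R0) (vecm R0)"
    using R0_eigen by (simp add: G_def D_def cinner_scale_right)
  then have "cinner (vecm R0) (G *v vecm R0) \<noteq> 0"
    using R0_nonzero \<mu>_nonzero by (simp add: cinner_self_eq_0)
  moreover have "stable X" "hermitian X" if "X \<in> {R0 + cadj R0, mat \<i> ** (R0 - cadj R0)}" for X
    using that stable_R0 stable_cadj_R0 hermitian_add_cadj hermitian_imaginary_part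
    by (auto intro: stable_add stable_diff stable_mat_mult)
  ultimately show thesis
    using cinner_hermitian_parts_nonzero that by metis
qed

lemma ctrl_channel_tilted_state:
  assumes "stable H"
  shows "ctrl_channel \<theta>0 (tilted_state \<epsilon> H) = tilted_state \<epsilon> H"
proof -
  have "S *v vecm (mat 1) = vecm (mat 1)"
    by (simp add: S_vecm ctrl_channel_id)
  then have "S *v vecm (tilted_state \<epsilon> H) = vecm (tilted_state \<epsilon> H)"
    using assms by (simp add: vecm_tilted_state stable_def matrix_vector_right_distrib
        complex_matrix_vector_mult_scaleR_right vector_scalar_commute)
  then show ?thesis
    by (simp add: S_vecm vecm_inject)
qed

lemma D_vecm_tilted_state: "D *v vecm (tilted_state \<epsilon> H) = \<epsilon> *\<^sub>R (D *v vecm H)"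
  by (simp add: vecm_tilted_state D_vecm_id matrix_vector_right_distrib
      complex_matrix_vector_mult_scaleR_right vector_scalar_commute)

text \<open>Since \<open>\<langle>\<langle>Q| S = \<langle>\<langle>Q|\<close>, each of the \<open>N\<close> channel uses contributes the same amount
  to \<open>tr (Q \<partial>\<rho>)\<close>: this linear growth is the source of Heisenberg scaling.\<close>
lemma ctrace_derivative_iterate:
  assumes fixed: "ctrl_channel \<theta>0 \<rho>0 = \<rho>0" and \<rho>0: "hermitian \<rho>0"
    and Q: "stable Q" "hermitian Q"
  obtains d\<rho> where "((\<lambda>\<theta>. (ctrl_channel \<theta> ^^ N) \<rho>0) has_vector_derivative d\<rho>) (at \<theta>0)"
    "hermitian d\<rho>" "ctrace (Q ** d\<rho>) = of_nat N * cinner (vecm Q) (V *v (D *v vecm \<rho>0))"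
proof -
  let ?w = "V *v (D *v vecm \<rho>0)"
  let ?g = "\<Sum>j<N. ((\<lambda>y. V *v (T \<theta>0 *v y)) ^^ j) ?w"
  have "V *v (T \<theta>0 *v vecm \<rho>0) = vecm \<rho>0"
    using fixed by (simp flip: vecm_ctrl_channel)
  from has_vector_derivative_iterate_at_fixed_point[OF T_has_derivative this, of N]
  have "((\<lambda>\<theta>. vecm ((ctrl_channel \<theta> ^^ N) \<rho>0)) has_vector_derivative ?g) (at \<theta>0)"
    by (simp add: vecm_iterate_ctrl_channel)
  from bounded_linear.has_vector_derivative[OF bounded_linear_unvec this]
  have d\<rho>: "((\<lambda>\<theta>. (ctrl_channel \<theta> ^^ N) \<rho>0) has_vector_derivative unvec ?g) (at \<theta>0)"
    by simp
  moreover have "hermitian (unvec ?g)"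
    by (rule hermitian_vector_derivative[OF hermitian_iterate_ctrl_channel[OF \<rho>0] d\<rho>])
  moreover have "ctrace (Q ** unvec ?g) = of_nat N * cinner (vecm Q) ?w"
    using cinner_iterate_left_fixed[OF cadj_S_stable[OF Q(1)]]
    by (simp add: ctrace_hermitian_unvec[OF Q(2)] cinner_sum_right matrix_vector_mul_assoc)
  ultimately show thesis
    by (rule that)
qed

lemma qfi_iterate_lower_bound:
  assumes fixed: "ctrl_channel \<theta>0 \<rho>0 = \<rho>0" and \<rho>0: "posdef \<rho>0"
    and Q: "stable Q" "hermitian Q"
  defines "c \<equiv> cinner (vecm Q) (V *v (D *v vecm \<rho>0))"
  shows "Im c = 0"
    and "(real N * Re c)\<^sup>2 \<le> Re (ctrace (Q ** \<rho>0 ** Q)) * QFI (\<lambda>\<theta>. (ctrl_channel \<theta> ^^ N) \<rho>0) \<theta>0"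
proof -
  have h\<rho>0: "hermitian \<rho>0"
    using \<rho>0 by (simp add: posdef_def)
  have bound: "Im (of_nat M * c) = 0 \<and> (real M * Re c)\<^sup>2
      \<le> Re (ctrace (Q ** \<rho>0 ** Q)) * QFI (\<lambda>\<theta>. (ctrl_channel \<theta> ^^ M) \<rho>0) \<theta>0" for M
  proof -
    obtain d\<rho> where d\<rho>: "((\<lambda>\<theta>. (ctrl_channel \<theta> ^^ M) \<rho>0) has_vector_derivative d\<rho>) (at \<theta>0)"
      and h: "hermitian d\<rho>" and tr: "ctrace (Q ** d\<rho>) = of_nat M * c"
      using ctrace_derivative_iterate[OF fixed h\<rho>0 Q] unfolding c_def by blast
    have "QFI (\<lambda>\<theta>. (ctrl_channel \<theta> ^^ M) \<rho>0) \<theta>0 = qfi_sld \<rho>0 d\<rho>"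
      using vector_derivative_at[OF d\<rho>] fixed by (simp add: QFI_def funpow_fixed_point)
    then show ?thesis
      using qfi_sld_lower_bound[OF \<rho>0 h Q(2)] Im_ctrace_hermitian_mult[OF Q(2) h] tr by simp
  qed
  show "Im c = 0"
    \<comment> \<open>for \<open>N = 1\<close>, \<open>c\<close> is the trace of a product of two Hermitian matrices\<close>
    using bound[of 1] by simp
  show "(real N * Re c)\<^sup>2 \<le> Re (ctrace (Q ** \<rho>0 ** Q)) * QFI (\<lambda>\<theta>. (ctrl_channel \<theta> ^^ N) \<rho>0) \<theta>0"
    using bound[of N] by simp
qed

end

theorem theorem2:
  fixes K :: "real \<Rightarrow> 'k::finite \<Rightarrow> complex ^'n::finite ^'n"
    and \<theta>0 :: real
    and P :: "complex ^('n \<times> 'n) ^('n \<times> 'n)"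
    and Uc R0 :: "complex ^'n ^'n"
    and \<mu> :: complex
  assumes chan: "\<forall>\<theta>. unital_channel (K \<theta>)"
    and diff: "\<forall>\<theta>. (\<lambda>t. liouville (K t)) differentiable (at \<theta>)"
    and P_proj: "P ** P = P" "cadj P = P"
    and P_range: "\<forall>v. P *v v = v \<longleftrightarrow>
        (cadj (liouville (K \<theta>0)) ** liouville (K \<theta>0)) *v v = v"
    and nz: "P ** cadj (liouville (K \<theta>0)) ** vector_derivative (\<lambda>t. liouville (K t)) (at \<theta>0) ** P \<noteq> 0"
    and normal: "normal_op (P ** cadj (liouville (K \<theta>0)) ** vector_derivative (\<lambda>t. liouville (K t)) (at \<theta>0) ** P)"
    and Uc: "unitary Uc"
    and eigvec: "vecm R0 \<noteq> 0" "\<mu> \<noteq> 0"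
      "(P ** cadj (liouville (K \<theta>0)) ** vector_derivative (\<lambda>t. liouville (K t)) (at \<theta>0) ** P) *v vecm R0
         = \<mu> *s vecm R0"
    and ctrl: "cadj Uc ** R0 ** Uc = kraus_apply (K \<theta>0) R0"
  shows "\<exists>\<rho>0. density_matrix \<rho>0 \<and>
     liminf (\<lambda>N::nat. ereal (QFI (\<lambda>\<theta>. ((\<lambda>\<rho>. Uc ** kraus_apply (K \<theta>) \<rho> ** cadj Uc) ^^ N) \<rho>0) \<theta>0
                               / (real N)^2)) > 0"
proof -
  interpret controlled_channel K \<theta>0 P Uc R0 \<mu>
    using chan diff P_proj P_range Uc eigvec ctrl by unfold_locales auto
  obtain Q H where Q: "stable Q" "hermitian Q" and H: "stable H" "hermitian H"
    and QGH: "cinner (vecm Q) (G *v vecm H) \<noteq> 0"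
    by (rule exists_stable_hermitian_pair)
  obtain \<epsilon> where "\<epsilon> > 0" and pd: "posdef (tilted_state \<epsilon> H)"
    and dm: "density_matrix (tilted_state \<epsilon> H)"
    using tilted_state_density[OF H(2)] by blast
  define \<rho>0 where "\<rho>0 = tilted_state \<epsilon> H"
  have fixed: "ctrl_channel \<theta>0 \<rho>0 = \<rho>0"
    unfolding \<rho>0_def using H(1) by (rule ctrl_channel_tilted_state)
  note bound = qfi_iterate_lower_bound[OF fixed pd[folded \<rho>0_def] Q]
  define c where "c = cinner (vecm Q) (V *v (D *v vecm \<rho>0))"
  have "c = of_real \<epsilon> * cinner (vecm Q) (G *v vecm H)"
    by (simp add: c_def \<rho>0_def D_vecm_tilted_state complex_matrix_vector_mult_scaleR_right
        cinner_scaleR_right cinner_V_D_stable[OF Q(1) H(1)])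
  then have "Re c \<noteq> 0"
    using bound(1) QGH \<open>\<epsilon> > 0\<close> by (simp add: c_def complex_eq_iff)
  moreover have "0 \<le> Re (ctrace (Q ** \<rho>0 ** Q))"
    using psd_ctrace_sandwich_nonneg[OF posdef_imp_psd[OF pd], of Q] Q(2)
    by (simp add: \<rho>0_def hermitian_def)
  ultimately have "0 < liminf (\<lambda>N. ereal (QFI (\<lambda>\<theta>. (ctrl_channel \<theta> ^^ N) \<rho>0) \<theta>0 / (real N)\<^sup>2))"
    using bound(2) unfolding c_def by (intro liminf_quadratic_growth_pos)
  then show ?thesis
    using dm unfolding \<rho>0_def ctrl_channel_def by blast
qed

end
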